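(* Let $1\le q<p$. Let $X$ be an asymptotically $p$-uniformly smooth Banach space, $Y$ a Banach space with a $1$-unconditional basis satisfying a lower $\ell_q$-estimate with constant $1$, and $f:X\to Y$ a coarse map. Then for every $t>0$ and $\delta\in(0,1)$ there exist $x\in X$, $\tau>t$ and a compact set $K\subset Y$ such that for every weakly null sequence $(x_n)$ in $B_X$ there is $n_0\in\mathbb N$ with $f(x+\tau x_n)\in K+\delta\tau B_Y$ for all $n>n_0$.
   Context: $X$ is asymptotically $p$-uniformly smooth if $\overline\rho_X(t)\le Ct^p$ for $t\in[0,1]$, where $\overline{\rho}_X(t)=\sup_{x\in\partial B_X}\inf_{\dim(X/E)<\infty}\sup_{h\in\partial B_E}\|x+th\|-1$. A $1$-unconditional basis of $Y$ satisfies a lower $\ell_q$-estimate with constant $1$ if $\|y_1+\dots+y_k\|^q\ge\sum_{n=1}^k\|y_n\|^q$ for all disjointly supported $y_1,\dots,y_k\in Y$. $f$ is a coarse map if $\omega_f(t)=\sup\{\|f(x)-f(y)\|:\|x-y\|\le t\}<\infty$ for all $t\ge0$. $K+\delta\tau B_Y=\{k+w:k\in K,\|w\|\le\delta\tau\}$. *)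

theory Defs
  imports "HOL-Analysis.Analysis" "HOL-Library.Extended_Real"
begin

definition fin_codim :: "'a::real_vector set \<Rightarrow> bool" where
  "fin_codim E \<longleftrightarrow> subspace E \<and> (\<exists>F. finite F \<and> span (E \<union> F) = UNIV)"

text \<open>Modulus of asymptotic uniform smoothness (extended reals, so that
  sup/inf of empty sets are handled by the usual conventions).\<close>
definition rho_bar :: "'a::real_normed_vector itself \<Rightarrow> real \<Rightarrow> ereal" where
  "rho_bar _ t = (SUP x\<in>sphere (0::'a) 1. INF E\<in>{E. fin_codim E}.
      SUP h\<in>sphere 0 1 \<inter> E. ereal (norm (x + t *\<^sub>R h) - 1))"

definition asympt_p_unif_smooth :: "'a::real_normed_vector itself \<Rightarrow> real \<Rightarrow> bool" where
  "asympt_p_unif_smooth T p \<longleftrightarrow>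
     (\<exists>C. \<forall>t\<in>{0..1}. rho_bar T t \<le> ereal (C * t powr p))"

definition schauder_basis :: "(nat \<Rightarrow> 'b::real_normed_vector) \<Rightarrow> bool" where
  "schauder_basis e \<longleftrightarrow> (\<forall>y. \<exists>!a. (\<lambda>n. a n *\<^sub>R e n) sums y)"

definition coord :: "(nat \<Rightarrow> 'b::real_normed_vector) \<Rightarrow> 'b \<Rightarrow> nat \<Rightarrow> real" where
  "coord e y = (THE a. (\<lambda>n. a n *\<^sub>R e n) sums y)"

definition bsupp :: "(nat \<Rightarrow> 'b::real_normed_vector) \<Rightarrow> 'b \<Rightarrow> nat set" where
  "bsupp e y = {n. coord e y n \<noteq> 0}"

definition one_unconditional_basis :: "(nat \<Rightarrow> 'b::real_normed_vector) \<Rightarrow> bool" where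
  "one_unconditional_basis e \<longleftrightarrow> schauder_basis e \<and>
     (\<forall>N (a::nat \<Rightarrow> real) (\<epsilon>::nat \<Rightarrow> real). (\<forall>i. \<epsilon> i = 1 \<or> \<epsilon> i = -1) \<longrightarrow>
        norm (\<Sum>i<N. (\<epsilon> i * a i) *\<^sub>R e i) \<le> norm (\<Sum>i<N. a i *\<^sub>R e i))"

definition lower_lq_estimate :: "(nat \<Rightarrow> 'b::real_normed_vector) \<Rightarrow> real \<Rightarrow> bool" where
  "lower_lq_estimate e q \<longleftrightarrow>
     (\<forall>k (y::nat \<Rightarrow> 'b). (\<forall>i<k. \<forall>j<k. i \<noteq> j \<longrightarrow> bsupp e (y i) \<inter> bsupp e (y j) = {}) \<longrightarrow>
        (\<Sum>i<k. norm (y i) powr q) \<le> norm (\<Sum>i<k. y i) powr q)"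

definition omega :: "('a::real_normed_vector \<Rightarrow> 'b::real_normed_vector) \<Rightarrow> real \<Rightarrow> ereal" where
  "omega f t = (SUP (x,y)\<in>{(x,y). norm (x - y) \<le> t}. ereal (norm (f x - f y)))"

definition coarse_map :: "('a::real_normed_vector \<Rightarrow> 'b::real_normed_vector) \<Rightarrow> bool" where
  "coarse_map f \<longleftrightarrow> (\<forall>t\<ge>0. omega f t < \<infinity>)"

definition weakly_null :: "(nat \<Rightarrow> 'a::real_normed_vector) \<Rightarrow> bool" where
  "weakly_null xs \<longleftrightarrow> (\<forall>\<phi>::'a \<Rightarrow> real. bounded_linear \<phi> \<longrightarrow> (\<lambda>n. \<phi> (xs n)) \<longlonglongrightarrow> 0)"

definition ball_nbhd :: "'b::real_normed_vector set \<Rightarrow> real \<Rightarrow> 'b set" where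
  "ball_nbhd K r = {k + w | k w. k \<in> K \<and> norm w \<le> r}"

end

theory Submission
  imports Defs
begin

text \<open>Let \<open>\<lambda>\<close> be the asymptotic Lipschitz constant of \<open>f\<close>, read off from its modulus \<open>\<omega>\<^sub>f\<close>, which grows
  at most linearly. If \<open>\<lambda> = 0\<close>, then \<open>f\<close> oscillates by less than \<open>\<delta>\<tau>\<close> on balls of a large radius \<open>\<tau>\<close>
  and a single point serves as \<open>K\<close>. Otherwise take \<open>a, b\<close> far apart with \<open>\<parallel>f a - f b\<parallel> \<approx> 2\<lambda>d\<close>,
  \<open>d = \<parallel>a - b\<parallel>/2\<close>, and let \<open>x\<close> be their midpoint, \<open>\<tau> = \<theta>d\<close>. Asymptotic smoothness of \<open>X\<close> keeps
  \<open>x + \<tau> x\<^sub>n\<close> eventually within \<open>d (1 + C\<theta>\<^sup>p + \<epsilon>)\<close> of both \<open>a\<close> and \<open>b\<close>, so \<open>f (x + \<tau> x\<^sub>n)\<close> is within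
  about \<open>\<lambda>d (1 + C\<theta>\<^sup>p)\<close> of both \<open>f a\<close> and \<open>f b\<close>. Cutting \<open>Y\<close> after the first \<open>N\<close> basis vectors,
  where \<open>f b - f a\<close> essentially lives, the lower \<open>\<ell>\<^sub>q\<close>-estimate bounds the tail of such a point by about
  \<open>((1 + C\<theta>\<^sup>p)\<^sup>q - 1)\<^bsup>1/q\<^esup> \<lambda>d\<close>, which is below \<open>\<delta>\<theta>d\<close> for small \<open>\<theta>\<close> because \<open>q < p\<close>; the head lies in
  a compact box of coefficients.\<close>

section \<open>Finite-codimensional subspaces and weakly null sequences\<close>

lemma subspace_closure:
  fixes S :: "'a::real_normed_vector set"
  assumes "subspace S"
  shows "subspace (closure S)"
  unfolding subspace_def
proof (intro conjI ballI allI)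
  show "0 \<in> closure S" using assms closure_subset subspace_0 by blast
next
  fix x y assume "x \<in> closure S" "y \<in> closure S"
  then obtain u v where u: "\<forall>n. u n \<in> S" "u \<longlonglongrightarrow> x" and v: "\<forall>n. v n \<in> S" "v \<longlonglongrightarrow> y"
    unfolding closure_sequential by blast
  have "(\<lambda>n. u n + v n) \<longlonglongrightarrow> x + y" using u v by (intro tendsto_intros)
  moreover have "\<forall>n. u n + v n \<in> S" using u v assms by (simp add: subspace_add)
  ultimately show "x + y \<in> closure S"
    unfolding closure_sequential by (intro exI[of _ "\<lambda>n. u n + v n"]) simp
next
  fix c x assume "x \<in> closure S"
  then obtain u where u: "\<forall>n. u n \<in> S" "u \<longlonglongrightarrow> x"
    unfolding closure_sequential by blast
  have "(\<lambda>n. c *\<^sub>R u n) \<longlonglongrightarrow> c *\<^sub>R x" using u by (intro tendsto_intros)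
  moreover have "\<forall>n. c *\<^sub>R u n \<in> S" using u assms by (simp add: subspace_scale)
  ultimately show "c *\<^sub>R x \<in> closure S"
    unfolding closure_sequential by (intro exI[of _ "\<lambda>n. c *\<^sub>R u n"]) simp
qed

lemma abs_mult_infdist_le_norm:
  fixes M :: "'a::real_normed_vector set"
  assumes "subspace M" "m \<in> M"
  shows "\<bar>t\<bar> * infdist b M \<le> norm (m + t *\<^sub>R b)"
proof (cases "t = 0")
  case False
  have "(- (1/t)) *\<^sub>R m \<in> M" using assms subspace_scale by blast
  then have "infdist b M \<le> norm (b + (1/t) *\<^sub>R m)"
    using infdist_le[of "(- (1/t)) *\<^sub>R m" M b] by (simp add: dist_norm)
  moreover have "m + t *\<^sub>R b = t *\<^sub>R (b + (1/t) *\<^sub>R m)" using False by (simp add: algebra_simps)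
  ultimately show ?thesis by (simp add: mult_left_mono)
qed simp

lemma line_coefficient_unique:
  fixes M :: "'a::real_vector set"
  assumes "subspace M" "b \<notin> M" "y - s *\<^sub>R b \<in> M" "y - t *\<^sub>R b \<in> M"
  shows "s = t"
proof (rule ccontr)
  assume "s \<noteq> t"
  have "(y - t *\<^sub>R b) - (y - s *\<^sub>R b) \<in> M" using assms subspace_diff by blast
  then have "(s - t) *\<^sub>R b \<in> M" by (simp add: algebra_simps)
  then have "(1/(s-t)) *\<^sub>R ((s - t) *\<^sub>R b) \<in> M" using assms subspace_scale by blast
  with \<open>s \<noteq> t\<close> assms(2) show False by simp
qed

lemma subspace_line_extension:
  fixes M :: "'a::real_vector set"
  assumes "subspace M"
  shows "subspace {m + t *\<^sub>R b | m t. m \<in> M}"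
  unfolding subspace_def
proof (intro conjI ballI allI)
  show "0 \<in> {m + t *\<^sub>R b | m t. m \<in> M}"
    using assms subspace_0 by (intro CollectI exI[of _ 0] exI[of _ "0::real"]) simp
next
  fix x y assume "x \<in> {m + t *\<^sub>R b | m t. m \<in> M}" "y \<in> {m + t *\<^sub>R b | m t. m \<in> M}"
  then obtain m1 t1 m2 t2 where "x = m1 + t1 *\<^sub>R b" "m1 \<in> M" "y = m2 + t2 *\<^sub>R b" "m2 \<in> M" by blast
  then show "x + y \<in> {m + t *\<^sub>R b | m t. m \<in> M}"
    by (intro CollectI exI[of _ "m1+m2"] exI[of _ "t1+t2"]) (auto simp: algebra_simps assms subspace_add)
next
  fix c x assume "x \<in> {m + t *\<^sub>R b | m t. m \<in> M}"
  then obtain m1 t1 where "x = m1 + t1 *\<^sub>R b" "m1 \<in> M" by blast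
  then show "c *\<^sub>R x \<in> {m + t *\<^sub>R b | m t. m \<in> M}"
    by (intro CollectI exI[of _ "c *\<^sub>R m1"] exI[of _ "c*t1"]) (auto simp: algebra_simps assms subspace_scale)
qed

lemma Cauchy_if_dist_dominated:
  fixes x :: "nat \<Rightarrow> 'a::metric_space" and t :: "nat \<Rightarrow> 'b::metric_space"
  assumes "Cauchy x" "k > 0" "\<And>i j. k * dist (t i) (t j) \<le> dist (x i) (x j)"
  shows "Cauchy t"
  unfolding Cauchy_def
proof (intro allI impI)
  fix \<epsilon> :: real assume "\<epsilon> > 0"
  with assms(1,2) obtain N where N: "\<forall>i\<ge>N. \<forall>j\<ge>N. dist (x i) (x j) < k * \<epsilon>"
    unfolding Cauchy_def by (meson mult_pos_pos)
  have "dist (t i) (t j) < \<epsilon>" if "i \<ge> N" "j \<ge> N" for i j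
    using N that assms(2) assms(3)[of i j] by (smt (verit) mult_less_cancel_left_pos)
  then show "\<exists>N. \<forall>i\<ge>N. \<forall>j\<ge>N. dist (t i) (t j) < \<epsilon>" by blast
qed

lemma closed_line_extension:
  fixes M :: "'a::real_normed_vector set"
  assumes "subspace M" "closed M" "b \<notin> M"
  shows "closed {m + t *\<^sub>R b | m t. m \<in> M}"
  unfolding closed_sequential_limits
proof (intro allI impI, elim conjE)
  fix x l assume xs: "\<forall>n. x n \<in> {m + t *\<^sub>R b | m t. m \<in> M}" and xl: "x \<longlonglongrightarrow> l"
  then have "\<forall>n. \<exists>mt. x n = fst mt + snd mt *\<^sub>R b \<and> fst mt \<in> M" by force
  then obtain mt where "\<forall>n. x n = fst (mt n) + snd (mt n) *\<^sub>R b \<and> fst (mt n) \<in> M"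
    by metis
  then obtain m t where mt: "\<And>n. x n = m n + t n *\<^sub>R b" "\<And>n. m n \<in> M"
    by (intro that[of "\<lambda>n. fst (mt n)" "\<lambda>n. snd (mt n)"]) auto
  have d: "infdist b M > 0"
    using infdist_pos_not_in_closed assms subspace_0 by blast
  have "infdist b M * dist (t i) (t j) \<le> dist (x i) (x j)" for i j
  proof -
    have "m i - m j \<in> M" using mt assms subspace_diff by blast
    then have "\<bar>t i - t j\<bar> * infdist b M \<le> norm ((m i - m j) + (t i - t j) *\<^sub>R b)"
      by (rule abs_mult_infdist_le_norm[OF assms(1)])
    then show ?thesis by (simp add: mt dist_norm dist_real_def algebra_simps)
  qed
  with LIMSEQ_imp_Cauchy[OF xl] d have "Cauchy t" by (rule Cauchy_if_dist_dominated)
  then obtain \<tau> where "t \<longlonglongrightarrow> \<tau>" using Cauchy_convergent_iff convergent_def by blast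
  with xl have "(\<lambda>n. x n - t n *\<^sub>R b) \<longlonglongrightarrow> l - \<tau> *\<^sub>R b" by (intro tendsto_intros)
  moreover have "\<And>n. x n - t n *\<^sub>R b \<in> M" using mt by simp
  ultimately have "l - \<tau> *\<^sub>R b \<in> M" by (rule closed_sequentially[OF assms(2), rotated])
  then show "l \<in> {m + t *\<^sub>R b | m t. m \<in> M}"
    by (intro CollectI exI[of _ "l - \<tau> *\<^sub>R b"] exI[of _ \<tau>]) simp
qed

lemma closed_subspace_line_extension:
  fixes M :: "'a::real_normed_vector set"
  assumes "subspace M" "closed M"
  obtains M' where "subspace M'" "closed M'" "M \<subseteq> M'" "b \<in> M'" "\<And>y. y \<in> M' \<Longrightarrow> \<exists>t. y - t *\<^sub>R b \<in> M"
proof (cases "b \<in> M")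
  case True
  then show ?thesis using assms by (intro that[of M]) (auto intro: exI[of _ "0::real"])
next
  case False
  let ?M' = "{m + t *\<^sub>R b | m t. m \<in> M}"
  have "m \<in> ?M'" if "m \<in> M" for m
    using that by (intro CollectI exI[of _ m] exI[of _ "0::real"]) simp
  moreover have "b \<in> ?M'"
    using assms subspace_0 by (intro CollectI exI[of _ 0] exI[of _ "1::real"]) auto
  moreover have "\<exists>t. y - t *\<^sub>R b \<in> M" if y: "y \<in> ?M'" for y
  proof -
    obtain m t where "y = m + t *\<^sub>R b" "m \<in> M" using y by blast
    then show ?thesis by (intro exI[of _ t]) simp
  qed
  ultimately show ?thesis
    using subspace_line_extension[OF assms(1), of b] closed_line_extension[OF assms False]
    by (intro that[of ?M']) auto
qed

lemma bounded_linear_line_coefficient: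
  fixes M :: "'a::real_normed_vector set"
  assumes M: "subspace M" "closed M" "b \<notin> M"
    and g: "bounded_linear g" "\<And>x. \<exists>t. g x - t *\<^sub>R b \<in> M"
  shows "\<exists>c. bounded_linear c \<and> (\<forall>x. g x - c x *\<^sub>R b \<in> M)"
proof -
  define c where "c x = (THE t. g x - t *\<^sub>R b \<in> M)" for x
  have c: "g x - c x *\<^sub>R b \<in> M" for x
  proof -
    have "\<exists>!t. g x - t *\<^sub>R b \<in> M" using g(2) line_coefficient_unique[OF M(1,3)] by blast
    then show ?thesis unfolding c_def by (rule theI')
  qed
  have c_eq: "c x = t" if "g x - t *\<^sub>R b \<in> M" for x t
    using line_coefficient_unique[OF M(1,3) c that] .
  have d: "infdist b M > 0"
    using infdist_pos_not_in_closed M subspace_0 by blast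
  obtain K where K: "\<And>x. norm (g x) \<le> norm x * K" using bounded_linear.bounded[OF g(1)] by blast
  have "bounded_linear c"
  proof (rule bounded_linear_intro)
    fix x y
    have "g (x + y) - (c x + c y) *\<^sub>R b = (g x - c x *\<^sub>R b) + (g y - c y *\<^sub>R b)"
      using linear_add[OF bounded_linear.linear[OF g(1)]] by (simp add: algebra_simps)
    also have "\<dots> \<in> M" using c M(1) subspace_add by blast
    finally show "c (x + y) = c x + c y" by (rule c_eq)
  next
    fix r x
    have "g (r *\<^sub>R x) - (r * c x) *\<^sub>R b = r *\<^sub>R (g x - c x *\<^sub>R b)"
      using linear_scale[OF bounded_linear.linear[OF g(1)]] by (simp add: algebra_simps)
    also have "\<dots> \<in> M" using c M(1) subspace_scale by blast
    finally show "c (r *\<^sub>R x) = r *\<^sub>R c x" by (simp add: c_eq)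
  next
    fix x
    have "\<bar>c x\<bar> * infdist b M \<le> norm (g x)"
      using abs_mult_infdist_le_norm[OF M(1) c[of x], of "c x" b] by simp
    then have "\<bar>c x\<bar> * infdist b M \<le> norm x * K" using K order_trans by blast
    then show "norm (c x) \<le> norm x * (K / infdist b M)" using d by (simp add: field_simps)
  qed
  with c show ?thesis by blast
qed

lemma closed_fin_codim_coefficients:
  fixes B :: "'a::real_normed_vector set"
  assumes "finite B"
  shows "closed M \<Longrightarrow> subspace M \<Longrightarrow> span (M \<union> B) = UNIV \<Longrightarrow>
    \<exists>c. (\<forall>b\<in>B. bounded_linear (c b)) \<and> (\<forall>x. x - (\<Sum>b\<in>B. c b x *\<^sub>R b) \<in> M)"
  using assms
proof (induction B arbitrary: M rule: finite_induct)
  case empty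
  then have "M = UNIV" using span_eq_iff by fastforce
  then show ?case by simp
next
  case (insert b B)
  obtain M' where M': "subspace M'" "closed M'" "M \<subseteq> M'" "b \<in> M'"
    and coeff: "\<And>y. y \<in> M' \<Longrightarrow> \<exists>t. y - t *\<^sub>R b \<in> M"
    using closed_subspace_line_extension[OF insert.prems(2,1)] by blast
  have "UNIV = span (M \<union> insert b B)" using insert by simp
  also have "\<dots> \<subseteq> span (M' \<union> B)" using M' by (intro span_mono) auto
  finally have "span (M' \<union> B) = UNIV" by auto
  then obtain c where c: "\<forall>b\<in>B. bounded_linear (c b)" "\<forall>x. x - (\<Sum>b\<in>B. c b x *\<^sub>R b) \<in> M'"
    using insert.IH M' by blast
  define g where "g x = x - (\<Sum>b\<in>B. c b x *\<^sub>R b)" for x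
  have g: "bounded_linear g" unfolding g_def using c(1)
    by (intro bounded_linear_sub bounded_linear_ident bounded_linear_sum
        bounded_linear_compose[OF bounded_linear_scaleR_left]) auto
  have gM: "\<exists>t. g x - t *\<^sub>R b \<in> M" for x using coeff c(2) by (simp add: g_def)
  obtain cb where cb: "bounded_linear cb" "\<forall>x. g x - cb x *\<^sub>R b \<in> M"
  proof (cases "b \<in> M")
    case True
    have "g x \<in> M" for x
    proof -
      obtain t where "g x - t *\<^sub>R b \<in> M" using gM by blast
      then have "(g x - t *\<^sub>R b) + t *\<^sub>R b \<in> M" using True insert.prems(2) subspace_add subspace_scale by blast
      then show ?thesis by simp
    qed
    then show ?thesis using that[of "\<lambda>_. 0"] by (simp add: bounded_linear_zero)
  next
    case False
    then show ?thesis using that bounded_linear_line_coefficient[OF insert.prems(2,1) False g gM] by blast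
  qed
  have "x - (\<Sum>b'\<in>insert b B. (c(b := cb)) b' x *\<^sub>R b') = g x - cb x *\<^sub>R b" for x
  proof -
    have "(\<Sum>b'\<in>B. (c(b := cb)) b' x *\<^sub>R b') = (\<Sum>b'\<in>B. c b' x *\<^sub>R b')"
      using insert.hyps by (intro sum.cong) auto
    then show ?thesis using insert.hyps by (simp add: g_def algebra_simps)
  qed
  then show ?case using c(1) cb by (intro exI[of _ "c(b := cb)"]) auto
qed

lemma weakly_null_eventually_near_subspace:
  fixes xs :: "nat \<Rightarrow> 'a::real_normed_vector"
  assumes wn: "weakly_null xs" and E: "fin_codim E" and \<eta>: "\<eta> > 0"
  shows "eventually (\<lambda>n. \<exists>e\<in>E. norm (xs n - e) < \<eta>) sequentially"
proof -
  obtain F where E: "subspace E" "finite F" "span (E \<union> F) = UNIV"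
    using E by (auto simp: fin_codim_def)
  have "UNIV = span (E \<union> F)" using E by simp
  also have "\<dots> \<subseteq> span (closure E \<union> F)" by (intro span_mono) (use closure_subset in auto)
  finally obtain c where c: "\<forall>b\<in>F. bounded_linear (c b)" "\<forall>x. x - (\<Sum>b\<in>F. c b x *\<^sub>R b) \<in> closure E"
    using closed_fin_codim_coefficients[OF E(2)] subspace_closure[OF E(1)] by blast
  have "(\<lambda>n. \<Sum>b\<in>F. c b (xs n) *\<^sub>R b) \<longlonglongrightarrow> 0"
  proof (rule tendsto_null_sum)
    fix b assume "b \<in> F"
    then have "(\<lambda>n. c b (xs n)) \<longlonglongrightarrow> 0" using wn c unfolding weakly_null_def by blast
    then have "(\<lambda>n. c b (xs n) *\<^sub>R b) \<longlonglongrightarrow> 0 *\<^sub>R b" by (intro tendsto_intros)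
    then show "(\<lambda>n. c b (xs n) *\<^sub>R b) \<longlonglongrightarrow> 0" by simp
  qed
  then have "eventually (\<lambda>n. norm (\<Sum>b\<in>F. c b (xs n) *\<^sub>R b) < \<eta>/2) sequentially"
    using \<eta> by (intro order_tendstoD(2)[OF tendsto_norm_zero]) auto
  then show ?thesis
  proof (rule eventually_mono)
    fix n assume n: "norm (\<Sum>b\<in>F. c b (xs n) *\<^sub>R b) < \<eta>/2"
    define r where "r = xs n - (\<Sum>b\<in>F. c b (xs n) *\<^sub>R b)"
    have "r \<in> closure E" using c by (simp add: r_def)
    then obtain e where e: "e \<in> E" "dist e r < \<eta>/2" using closure_approachable \<eta> by (metis half_gt_zero)
    have "norm (xs n - e) \<le> norm (xs n - r) + norm (r - e)" using norm_triangle_ineq[of "xs n - r" "r - e"] by simp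
    also have "\<dots> < \<eta>" using n e by (simp add: r_def dist_norm norm_minus_commute)
    finally show "\<exists>e\<in>E. norm (xs n - e) < \<eta>" using e by blast
  qed
qed

section \<open>Asymptotic uniform smoothness\<close>

lemma asympt_p_unif_smooth_nonneg_constant:
  assumes "asympt_p_unif_smooth T p"
  obtains C where "C \<ge> 0" "\<forall>t\<in>{0..1}. rho_bar T t \<le> ereal (C * t powr p)"
proof -
  obtain C where C: "\<forall>t\<in>{0..1}. rho_bar T t \<le> ereal (C * t powr p)"
    using assms by (auto simp: asympt_p_unif_smooth_def)
  have "rho_bar T t \<le> ereal (max C 0 * t powr p)" if "t \<in> {0..1}" for t
    using C that order_trans[of _ "ereal (C * t powr p)"] mult_right_mono[of C "max C 0" "t powr p"]
    by fastforce
  then show ?thesis by (intro that[of "max C 0"]) auto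
qed

lemma rho_bar_less_obtains_fin_codim:
  assumes "rho_bar TYPE('a::real_normed_vector) \<theta> < ereal B" "(x::'a) \<in> sphere 0 1"
  obtains E where "fin_codim E" "\<And>h. h \<in> sphere 0 1 \<inter> E \<Longrightarrow> norm (x + \<theta> *\<^sub>R h) < 1 + B"
proof -
  have "(INF E\<in>{E. fin_codim E}. SUP h\<in>sphere 0 1 \<inter> E. ereal (norm (x + \<theta> *\<^sub>R h) - 1)) < ereal B"
    using assms unfolding rho_bar_def by (meson SUP_upper le_less_trans)
  then obtain E where E: "fin_codim E"
    and sup: "(SUP h\<in>sphere 0 1 \<inter> E. ereal (norm (x + \<theta> *\<^sub>R h) - 1)) < ereal B"
    by (auto simp: INF_less_iff)
  have "norm (x + \<theta> *\<^sub>R h) < 1 + B" if "h \<in> sphere 0 1 \<inter> E" for h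
  proof -
    have "ereal (norm (x + \<theta> *\<^sub>R h) - 1) < ereal B"
      using SUP_upper[OF that, of "\<lambda>h. ereal (norm (x + \<theta> *\<^sub>R h) - 1)"] sup by (rule le_less_trans)
    then show ?thesis by simp
  qed
  with E show ?thesis by (intro that) auto
qed

text \<open>\<open>x + \<theta> h\<close> lies on the segment from \<open>x - \<theta> h'\<close> to \<open>x + \<theta> h'\<close>, where \<open>h' = h /\<parallel>h\<parallel>\<close>.\<close>

lemma norm_add_scaled_le_of_sphere:
  fixes x :: "'a::real_normed_vector"
  assumes E: "subspace E" and x: "norm x \<le> A"
    and sphere: "\<And>h. h \<in> sphere 0 1 \<inter> E \<Longrightarrow> norm (x + \<theta> *\<^sub>R h) \<le> A"
    and h: "h \<in> E" "norm h \<le> 1"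
  shows "norm (x + \<theta> *\<^sub>R h) \<le> A"
proof (cases "h = 0")
  case False
  define l where "l = norm h"
  define h' where "h' = (1/l) *\<^sub>R h"
  have l: "0 < l" "l \<le> 1" using False h by (auto simp: l_def)
  have h': "h' \<in> sphere 0 1 \<inter> E" "-h' \<in> sphere 0 1 \<inter> E"
    using h l E by (auto simp: h'_def l_def subspace_scale subspace_neg)
  have "x + \<theta> *\<^sub>R h = ((1+l)/2) *\<^sub>R (x + \<theta> *\<^sub>R h') + ((1-l)/2) *\<^sub>R (x + \<theta> *\<^sub>R (-h'))"
    using l by (simp add: h'_def algebra_simps) (simp add: scaleR_add_left[symmetric] field_simps)
  then have "norm (x + \<theta> *\<^sub>R h) \<le> ((1+l)/2) * norm (x + \<theta> *\<^sub>R h') + ((1-l)/2) * norm (x + \<theta> *\<^sub>R (-h'))"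
    using l norm_triangle_ineq[of "((1+l)/2) *\<^sub>R (x + \<theta> *\<^sub>R h')" "((1-l)/2) *\<^sub>R (x + \<theta> *\<^sub>R (-h'))"]
    by simp
  also have "\<dots> \<le> ((1+l)/2) * A + ((1-l)/2) * A"
    using l sphere[OF h'(1)] sphere[OF h'(2)] by (intro add_mono mult_left_mono) auto
  finally show ?thesis by (simp add: field_simps)
qed (use x in simp)

lemma weakly_null_eventually_near_unit_ball:
  fixes xs :: "nat \<Rightarrow> 'a::real_normed_vector"
  assumes "weakly_null xs" "\<forall>n. norm (xs n) \<le> 1" "fin_codim E" "\<eta> > 0"
  shows "eventually (\<lambda>n. \<exists>e\<in>E. norm e \<le> 1 \<and> norm (xs n - e) < \<eta>) sequentially"
  using weakly_null_eventually_near_subspace[OF assms(1,3) half_gt_zero[OF assms(4)]]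
proof (rule eventually_mono)
  fix n assume "\<exists>e\<in>E. norm (xs n - e) < \<eta>/2"
  then obtain e where e: "e \<in> E" "norm (xs n - e) < \<eta>/2" by blast
  define e' where "e' = (1 / max 1 (norm e)) *\<^sub>R e"
  have "e' \<in> E" using e assms(3) by (simp add: e'_def fin_codim_def subspace_scale)
  moreover have "norm e' \<le> 1" by (simp add: e'_def divide_le_eq)
  moreover have "norm (e - e') \<le> norm (xs n - e)"
  proof -
    have "norm (e - e') = max 0 (norm e - 1)"
    proof (cases "norm e \<le> 1")
      case False
      then have "e - e' = (1 - 1 / norm e) *\<^sub>R e" by (simp add: e'_def algebra_simps)
      moreover have "0 \<le> 1 - 1 / norm e" using False by (simp add: divide_le_eq)
      ultimately have "norm (e - e') = (1 - 1 / norm e) * norm e" by simp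
      also have "\<dots> = norm e - 1" using False by (auto simp: field_simps)
      finally show ?thesis using False by simp
    qed (simp add: e'_def)
    also have "\<dots> \<le> norm (xs n - e)"
      using assms(2)[rule_format, of n] norm_triangle_ineq2[of e "xs n"] by (simp add: norm_minus_commute)
    finally show ?thesis .
  qed
  ultimately show "\<exists>e\<in>E. norm e \<le> 1 \<and> norm (xs n - e) < \<eta>"
    using e norm_triangle_ineq[of "xs n - e" "e - e'"] by (intro bexI[of _ e']) auto
qed

text \<open>The finite-codimensional subspace that the modulus provides at the direction of \<open>z\<close> eventually
  captures \<open>xs n\<close> up to \<open>\<epsilon>\<close>.\<close>

lemma aus_eventually_norm_le:
  fixes xs :: "nat \<Rightarrow> 'a::real_normed_vector" and z :: 'a
  assumes AUS: "\<forall>s\<in>{0..1}. rho_bar TYPE('a) s \<le> ereal (C * s powr p)" and "C \<ge> 0"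
    and "z \<noteq> 0" "0 \<le> \<theta>" "\<theta> \<le> 1" "\<epsilon> > 0"
    and "weakly_null xs" "\<forall>n. norm (xs n) \<le> 1"
  shows "eventually (\<lambda>n. norm (z + (\<theta> * norm z) *\<^sub>R xs n) \<le> norm z * (1 + C * \<theta> powr p + \<epsilon>))
    sequentially"
proof -
  define x where "x = (1 / norm z) *\<^sub>R z"
  define A where "A = 1 + C * \<theta> powr p + \<epsilon>/2"
  have x: "x \<in> sphere 0 1" using assms by (simp add: x_def)
  have "rho_bar TYPE('a) \<theta> < ereal (C * \<theta> powr p + \<epsilon>/2)"
    using AUS assms le_less_trans[of _ "ereal (C * \<theta> powr p)"] by simp
  then obtain E where E: "fin_codim E"
    and sphere_lt: "\<And>h. h \<in> sphere 0 1 \<inter> E \<Longrightarrow> norm (x + \<theta> *\<^sub>R h) < 1 + (C * \<theta> powr p + \<epsilon>/2)"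
    using x by (rule rho_bar_less_obtains_fin_codim) blast
  have sphere: "norm (x + \<theta> *\<^sub>R h) \<le> A" if "h \<in> sphere 0 1 \<inter> E" for h
    using sphere_lt[OF that] by (simp add: A_def)
  have "subspace E" using E by (simp add: fin_codim_def)
  moreover have "norm x \<le> A" using x assms(2,6) by (simp add: A_def)
  ultimately have ball: "norm (x + \<theta> *\<^sub>R e) \<le> A" if "e \<in> E" "norm e \<le> 1" for e
    using sphere that by (rule norm_add_scaled_le_of_sphere)
  show ?thesis
    using weakly_null_eventually_near_unit_ball[OF assms(7,8) E half_gt_zero[OF assms(6)]]
  proof (rule eventually_mono)
    fix n assume "\<exists>e\<in>E. norm e \<le> 1 \<and> norm (xs n - e) < \<epsilon>/2"
    then obtain e where e: "e \<in> E" "norm e \<le> 1" "norm (xs n - e) < \<epsilon>/2" by blast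
    have "norm (\<theta> *\<^sub>R (xs n - e)) \<le> \<epsilon>/2"
      using assms(4,5) e(3) mult_mono[of \<theta> 1 "norm (xs n - e)" "\<epsilon>/2"] by simp
    then have "norm (x + \<theta> *\<^sub>R xs n) \<le> A + \<epsilon>/2"
      using ball[OF e(1,2)] norm_triangle_ineq[of "x + \<theta> *\<^sub>R e" "\<theta> *\<^sub>R (xs n - e)"]
      by (simp add: algebra_simps)
    moreover have "z + (\<theta> * norm z) *\<^sub>R xs n = norm z *\<^sub>R (x + \<theta> *\<^sub>R xs n)"
      using assms(3) by (simp add: x_def algebra_simps)
    ultimately show "norm (z + (\<theta> * norm z) *\<^sub>R xs n) \<le> norm z * (1 + C * \<theta> powr p + \<epsilon>)"
      by (simp add: A_def mult_left_mono)
  qed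
qed

section \<open>Schauder bases with a lower \<open>\<ell>\<^sub>q\<close>-estimate\<close>

definition basis_proj :: "(nat \<Rightarrow> 'b::real_normed_vector) \<Rightarrow> nat \<Rightarrow> 'b \<Rightarrow> 'b" where
  "basis_proj e N y = (\<Sum>i<N. coord e y i *\<^sub>R e i)"

definition basis_box :: "(nat \<Rightarrow> 'b::real_normed_vector) \<Rightarrow> nat \<Rightarrow> (nat \<Rightarrow> real) \<Rightarrow> 'b set" where
  "basis_box e N r = {\<Sum>i<N. a i *\<^sub>R e i | a. \<forall>i<N. \<bar>a i\<bar> \<le> r i}"

lemma compact_basis_box: "compact (basis_box e N r)"
proof (induction N)
  case 0
  have "basis_box e 0 r = {0}" by (auto simp: basis_box_def)
  then show ?case by simp
next
  case (Suc N)
  let ?T = "(\<lambda>t. t *\<^sub>R e N) ` {- r N .. r N}"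
  have "compact ?T" by (rule compact_continuous_image) (auto intro!: continuous_intros)
  moreover have "basis_box e (Suc N) r = {x + y | x y. x \<in> basis_box e N r \<and> y \<in> ?T}"
  proof (intro set_eqI iffI)
    fix v assume "v \<in> basis_box e (Suc N) r"
    then obtain a where a: "v = (\<Sum>i<Suc N. a i *\<^sub>R e i)" "\<forall>i<Suc N. \<bar>a i\<bar> \<le> r i"
      by (auto simp: basis_box_def)
    have "a N \<in> {- r N .. r N}" using a(2) by (auto simp: abs_le_iff)
    then have "(\<Sum>i<N. a i *\<^sub>R e i) \<in> basis_box e N r" "a N *\<^sub>R e N \<in> ?T"
      using a(2) by (auto simp: basis_box_def)
    then show "v \<in> {x + y | x y. x \<in> basis_box e N r \<and> y \<in> ?T}" using a(1) by auto
  next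
    fix v assume "v \<in> {x + y | x y. x \<in> basis_box e N r \<and> y \<in> ?T}"
    then obtain a t where a: "v = (\<Sum>i<N. a i *\<^sub>R e i) + t *\<^sub>R e N" "\<forall>i<N. \<bar>a i\<bar> \<le> r i"
      "t \<in> {- r N .. r N}"
      by (auto simp: basis_box_def)
    have "(\<Sum>i<N. (a(N := t)) i *\<^sub>R e i) = (\<Sum>i<N. a i *\<^sub>R e i)" by (rule sum.cong) auto
    then have "v = (\<Sum>i<Suc N. (a(N := t)) i *\<^sub>R e i)" using a by simp
    moreover have "\<forall>i<Suc N. \<bar>(a(N := t)) i\<bar> \<le> r i" using a by (auto simp: less_Suc_eq abs_le_iff)
    ultimately show "v \<in> basis_box e (Suc N) r" unfolding basis_box_def by blast
  qed
  ultimately show ?case using compact_sums[OF Suc] by simp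
qed

context
  fixes e :: "nat \<Rightarrow> 'b::real_normed_vector"
  assumes basis: "schauder_basis e"
begin

lemma coord_sums: "(\<lambda>n. coord e y n *\<^sub>R e n) sums y"
proof -
  have "\<exists>!a. (\<lambda>n. a n *\<^sub>R e n) sums y" using basis by (simp add: schauder_basis_def)
  then show ?thesis unfolding coord_def by (rule theI')
qed

lemma coord_unique: "(\<lambda>n. a n *\<^sub>R e n) sums y \<Longrightarrow> coord e y = a"
proof -
  assume "(\<lambda>n. a n *\<^sub>R e n) sums y"
  moreover have "\<exists>!a. (\<lambda>n. a n *\<^sub>R e n) sums y" using basis by (simp add: schauder_basis_def)
  ultimately show ?thesis unfolding coord_def by (intro the1_equality)
qed

lemma coord_add: "coord e (x + y) = (\<lambda>n. coord e x n + coord e y n)"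
  by (rule coord_unique) (use sums_add[OF coord_sums[of x] coord_sums[of y]] in \<open>simp add: scaleR_add_left\<close>)

lemma coord_diff: "coord e (x - y) = (\<lambda>n. coord e x n - coord e y n)"
  by (rule coord_unique) (use sums_diff[OF coord_sums[of x] coord_sums[of y]] in \<open>simp add: scaleR_diff_left\<close>)

lemma coord_scaleR: "coord e (r *\<^sub>R x) = (\<lambda>n. r * coord e x n)"
  by (rule coord_unique) (use sums_scaleR_right[OF coord_sums[of x], of r] in simp)

lemma basis_proj_add: "basis_proj e N (x + y) = basis_proj e N x + basis_proj e N y"
  by (simp add: basis_proj_def coord_add scaleR_add_left sum.distrib)

lemma basis_proj_diff: "basis_proj e N (x - y) = basis_proj e N x - basis_proj e N y"
  by (simp add: basis_proj_def coord_diff scaleR_diff_left sum_subtractf)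

lemma basis_proj_scaleR: "basis_proj e N (r *\<^sub>R y) = r *\<^sub>R basis_proj e N y"
  by (simp add: basis_proj_def coord_scaleR scaleR_sum_right)

lemma coord_basis_proj: "coord e (basis_proj e N y) = (\<lambda>i. if i < N then coord e y i else 0)"
proof (rule coord_unique)
  have "(\<lambda>n. (if n < N then coord e y n else 0) *\<^sub>R e n) sums
      (\<Sum>n<N. (if n < N then coord e y n else 0) *\<^sub>R e n)"
    by (rule sums_finite) auto
  then show "(\<lambda>n. (if n < N then coord e y n else 0) *\<^sub>R e n) sums basis_proj e N y"
    by (simp add: basis_proj_def)
qed

lemma coord_basis_tail: "coord e (y - basis_proj e N y) = (\<lambda>i. if i < N then 0 else coord e y i)"
  by (auto simp: coord_diff coord_basis_proj fun_eq_iff)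

lemma schauder_basis_nonzero: "e i \<noteq> 0"
proof
  assume "e i = 0"
  then have "(\<lambda>n. (if n = i then (1::real) else 0) *\<^sub>R e n) = (\<lambda>n. 0)" by auto
  then have "(\<lambda>n. (if n = i then (1::real) else 0) *\<^sub>R e n) sums 0" by simp
  then have "coord e 0 i = 1" by (simp add: coord_unique)
  moreover have "coord e 0 = (\<lambda>n. 0)" by (rule coord_unique) simp
  ultimately show False by simp
qed

lemma basis_tail_small: "\<epsilon> > 0 \<Longrightarrow> \<exists>N. norm (y - basis_proj e N y) < \<epsilon>"
proof -
  assume "\<epsilon> > 0"
  moreover have "(\<lambda>N. basis_proj e N y) \<longlonglongrightarrow> y"
    using coord_sums[of y] by (simp add: sums_def basis_proj_def)
  ultimately obtain N where "\<forall>n\<ge>N. norm (basis_proj e n y - y) < \<epsilon>"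
    unfolding LIMSEQ_iff by blast
  then show ?thesis by (metis norm_minus_commute order_refl)
qed

end

context
  fixes e :: "nat \<Rightarrow> 'b::real_normed_vector" and q :: real
  assumes basis: "schauder_basis e" and lq: "lower_lq_estimate e q" and q: "q \<ge> 1"
begin

lemma lower_lq_proj_tail: "norm (basis_proj e N w) powr q + norm (w - basis_proj e N w) powr q \<le> norm w powr q"
proof -
  define y where "y i = (if i = 0 then basis_proj e N w else w - basis_proj e N w)" for i :: nat
  have "bsupp e (basis_proj e N w) \<inter> bsupp e (w - basis_proj e N w) = {}"
    by (auto simp: bsupp_def coord_basis_proj[OF basis] coord_basis_tail[OF basis])
  then have "\<forall>i<2. \<forall>j<2. i \<noteq> j \<longrightarrow> bsupp e (y i) \<inter> bsupp e (y j) = {}"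
    by (auto simp: y_def less_2_cases_iff)
  then have "(\<Sum>i<2. norm (y i) powr q) \<le> norm (\<Sum>i<2. y i) powr q"
    using lq unfolding lower_lq_estimate_def by blast
  then show ?thesis by (simp add: numeral_2_eq_2 y_def)
qed

lemma norm_basis_proj_le: "norm (basis_proj e N w) \<le> norm w"
proof (rule ccontr)
  assume "\<not> ?thesis"
  then have "norm w powr q < norm (basis_proj e N w) powr q" using q by (intro powr_less_mono2) auto
  moreover have "norm (basis_proj e N w) powr q \<le> norm w powr q"
    using lower_lq_proj_tail[of N w] powr_ge_zero[of "norm (w - basis_proj e N w)" q] by linarith
  ultimately show False by simp
qed

lemma basis_proj_in_box:
  assumes "norm w \<le> R"
  shows "basis_proj e N w \<in> basis_box e N (\<lambda>i. 2 * R / norm (e i))"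
proof -
  have "\<bar>coord e w i\<bar> * norm (e i) \<le> 2 * R" for i
  proof -
    have "\<bar>coord e w i\<bar> * norm (e i) = norm (basis_proj e (Suc i) w - basis_proj e i w)"
      by (simp add: basis_proj_def)
    also have "\<dots> \<le> norm (basis_proj e (Suc i) w) + norm (basis_proj e i w)" by (rule norm_triangle_ineq4)
    also have "\<dots> \<le> 2 * R" using norm_basis_proj_le[of "Suc i" w] norm_basis_proj_le[of i w] assms by simp
    finally show ?thesis .
  qed
  then have "\<bar>coord e w i\<bar> \<le> 2 * R / norm (e i)" for i
    using schauder_basis_nonzero[OF basis, of i] by (simp add: field_simps)
  then show ?thesis unfolding basis_box_def basis_proj_def by blast
qed

lemma lower_lq_head_tail_powr_less:
  assumes "0 \<le> \<epsilon>" "\<epsilon> \<le> 1" "0 \<le> A" "\<epsilon> * n \<le> T" "n \<ge> 0"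
    and "norm u \<le> A * n" "(1-\<epsilon>) * n \<le> norm (basis_proj e N u)"
    and "T - \<epsilon> * n < norm (u - basis_proj e N u)"
  shows "(1-\<epsilon>) powr q * n powr q + (T - \<epsilon> * n) powr q < A powr q * n powr q"
proof -
  have "((1-\<epsilon>) * n) powr q \<le> norm (basis_proj e N u) powr q"
    using assms q by (intro powr_mono2) auto
  moreover have "(T - \<epsilon> * n) powr q < norm (u - basis_proj e N u) powr q"
    using assms q by (intro powr_less_mono2) auto
  moreover have "norm u powr q \<le> (A * n) powr q" using assms q by (intro powr_mono2) auto
  ultimately show ?thesis using lower_lq_proj_tail[of N u] assms by (simp add: powr_mult)
qed

text \<open>If \<open>u\<close> is within \<open>A \<parallel>y\<parallel>\<close> of both \<open>y\<close> and \<open>-y\<close>, and \<open>y\<close> is essentially supported on the first \<open>N\<close>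
  coordinates, then the head of \<open>u + y\<close> or of \<open>u - y\<close> is almost as large as \<open>\<parallel>y\<parallel>\<close>; the lower
  \<open>\<ell>\<^sub>q\<close>-estimate then leaves little room for the tail of \<open>u\<close>.\<close>

lemma basis_tail_le_of_near_plus_minus:
  assumes "0 \<le> \<epsilon>" "\<epsilon> \<le> 1" "0 \<le> A"
    and tail: "norm (y - basis_proj e N y) \<le> \<epsilon> * norm y"
    and plus: "norm (u + y) \<le> A * norm y" and minus: "norm (u - y) \<le> A * norm y"
    and T: "\<epsilon> * norm y \<le> T"
    and budget: "(A powr q - (1-\<epsilon>) powr q) * norm y powr q < (T - \<epsilon> * norm y) powr q"
  shows "norm (u - basis_proj e N u) \<le> T"
proof (rule ccontr)
  assume large: "\<not> ?thesis"
  have tails: "T - \<epsilon> * norm y < norm ((u + s *\<^sub>R y) - basis_proj e N (u + s *\<^sub>R y))" if "\<bar>s\<bar> = 1" for s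
  proof -
    have "(u + s *\<^sub>R y) - basis_proj e N (u + s *\<^sub>R y) = (u - basis_proj e N u) + s *\<^sub>R (y - basis_proj e N y)"
      by (simp add: basis_proj_add[OF basis] basis_proj_scaleR[OF basis] algebra_simps)
    then have "norm (u - basis_proj e N u) - norm (s *\<^sub>R (y - basis_proj e N y))
        \<le> norm ((u + s *\<^sub>R y) - basis_proj e N (u + s *\<^sub>R y))"
      by (metis norm_diff_ineq)
    then show ?thesis using that tail large by simp
  qed
  have "2 *\<^sub>R basis_proj e N y = basis_proj e N (u + y) - basis_proj e N (u - y)"
    by (simp add: basis_proj_add[OF basis] basis_proj_diff[OF basis] scaleR_2)
  then have "2 * norm (basis_proj e N y) \<le> norm (basis_proj e N (u + y)) + norm (basis_proj e N (u - y))"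
    by (metis norm_scaleR abs_numeral norm_triangle_ineq4)
  moreover have "(1-\<epsilon>) * norm y \<le> norm (basis_proj e N y)"
    using tail norm_triangle_ineq2[of y "basis_proj e N y"] by (simp add: algebra_simps)
  ultimately have "\<exists>s\<in>{1, -1::real}. (1-\<epsilon>) * norm y \<le> norm (basis_proj e N (u + s *\<^sub>R y))"
    by auto
  then obtain s :: real where s: "\<bar>s\<bar> = 1" "(1-\<epsilon>) * norm y \<le> norm (basis_proj e N (u + s *\<^sub>R y))"
    "norm (u + s *\<^sub>R y) \<le> A * norm y"
    using plus minus that[of 1] that[of "-1"] by auto
  from lower_lq_head_tail_powr_less[OF assms(1-3) T norm_ge_zero s(3,2) tails[OF s(1)]]
  show False using budget by (simp add: algebra_simps)
qed

end

section \<open>Coarse maps and their asymptotic Lipschitz constant\<close>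

text \<open>For coarse maps \<open>omega f r\<close> is finite when \<open>r \<ge> 0\<close>; elsewhere \<open>omega_real\<close> carries junk values.\<close>

definition omega_real :: "('a::real_normed_vector \<Rightarrow> 'b::real_normed_vector) \<Rightarrow> real \<Rightarrow> real" where
  "omega_real f r = real_of_ereal (omega f r)"

context
  fixes f :: "'a::real_normed_vector \<Rightarrow> 'b::real_normed_vector"
  assumes coarse: "coarse_map f"
begin

lemma norm_diff_le_omega: "norm (x - y) \<le> r \<Longrightarrow> ereal (norm (f x - f y)) \<le> omega f r"
  unfolding omega_def by (rule SUP_upper2[of "(x,y)"]) auto

lemma omega_eq_omega_real: "0 \<le> r \<Longrightarrow> omega f r = ereal (omega_real f r) \<and> 0 \<le> omega_real f r"
proof -
  assume r: "0 \<le> r"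
  have "0 \<le> omega f r" using norm_diff_le_omega[of 0 0 r] r by (simp add: zero_ereal_def)
  moreover have "omega f r < \<infinity>" using coarse r by (simp add: coarse_map_def)
  ultimately show ?thesis unfolding omega_real_def by (cases "omega f r") auto
qed

lemma omega_real_nonneg: "0 \<le> r \<Longrightarrow> 0 \<le> omega_real f r"
  using omega_eq_omega_real by blast

lemma norm_diff_le_omega_real:
  assumes "norm (x - y) \<le> r"
  shows "norm (f x - f y) \<le> omega_real f r"
proof -
  have "0 \<le> r" using assms norm_ge_zero order_trans by blast
  then show ?thesis using norm_diff_le_omega[OF assms] omega_eq_omega_real[of r] by auto
qed

lemma omega_real_approx:
  assumes "0 \<le> r" "v < omega_real f r"
  shows "\<exists>x y. norm (x - y) \<le> r \<and> v < norm (f x - f y)"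
proof -
  have "ereal v < omega f r" using assms omega_eq_omega_real by simp
  then obtain xy where "xy \<in> {(x,y). norm (x - y) \<le> r}" "ereal v < ereal (norm (f (fst xy) - f (snd xy)))"
    unfolding omega_def less_SUP_iff by (auto simp: case_prod_unfold)
  then show ?thesis by (cases xy) auto
qed

lemma norm_diff_le_linear: "norm (f x - f y) \<le> omega_real f 1 * (norm (x - y) + 1)"
proof -
  have chain: "norm (f x - f y) \<le> real n * omega_real f 1" if "norm (x - y) \<le> real n" for n x y
    using that
  proof (induction n arbitrary: x)
    case (Suc n)
    define z where "z = y + (real n / real (Suc n)) *\<^sub>R (x - y)"
    have "norm (z - y) = (real n / real (Suc n)) * norm (x - y)" by (simp add: z_def)
    also have "\<dots> \<le> (real n / real (Suc n)) * real (Suc n)" using Suc.prems by (intro mult_left_mono) auto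
    also have "\<dots> = real n" by simp
    finally have zy: "norm (f z - f y) \<le> real n * omega_real f 1" by (rule Suc.IH)
    have "x - z = (1 - real n / real (Suc n)) *\<^sub>R (x - y)" by (simp add: z_def algebra_simps)
    moreover have "1 - real n / real (Suc n) = 1 / real (Suc n)" by (simp add: field_simps)
    ultimately have "norm (x - z) = norm (x - y) / real (Suc n)" by simp
    then have "norm (x - z) \<le> 1" using Suc.prems by (simp add: divide_le_eq)
    then have "norm (f x - f z) \<le> omega_real f 1" by (rule norm_diff_le_omega_real)
    with zy show ?case using norm_triangle_ineq[of "f x - f z" "f z - f y"] by (simp add: algebra_simps)
  qed simp
  have ceil: "norm (x - y) \<le> real (nat \<lceil>norm (x - y)\<rceil>)" "real (nat \<lceil>norm (x - y)\<rceil>) \<le> norm (x - y) + 1"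
    using norm_ge_zero[of "x - y"] by auto
  with chain[of x y] have "norm (f x - f y) \<le> real (nat \<lceil>norm (x - y)\<rceil>) * omega_real f 1"
    by blast
  also have "\<dots> \<le> (norm (x - y) + 1) * omega_real f 1"
    using ceil omega_eq_omega_real[of 1] by (intro mult_right_mono) auto
  finally show ?thesis by (simp add: mult.commute)
qed

lemma omega_real_le_linear: "0 \<le> r \<Longrightarrow> omega_real f r \<le> omega_real f 1 * (r + 1)"
proof -
  assume r: "0 \<le> r"
  have "omega f r \<le> ereal (omega_real f 1 * (r + 1))"
    unfolding omega_def
  proof (rule SUP_least, clarify)
    fix x y :: 'a assume "norm (x - y) \<le> r"
    then show "ereal (norm (f x - f y)) \<le> ereal (omega_real f 1 * (r + 1))"
      using norm_diff_le_linear[of x y] omega_eq_omega_real[of 1]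
      by (simp add: mult_left_mono order_trans)
  qed
  then show ?thesis using omega_eq_omega_real[OF r] by simp
qed

lemma exists_far_pair:
  assumes c: "0 < c" and often: "\<forall>R. \<exists>r\<ge>R. c * r < omega_real f r"
  shows "\<exists>a b. D < norm (a - b) \<and> c * norm (a - b) < norm (f a - f b)"
proof -
  define L where "L = omega_real f 1 + 1"
  have L: "0 < L" "omega_real f 1 \<le> L" using omega_eq_omega_real[of 1] by (auto simp: L_def)
  obtain s where s: "s \<ge> max ((D + 1) * L / c) 0" "c * s < omega_real f s" using often by blast
  obtain a b where ab: "norm (a - b) \<le> s" "c * s < norm (f a - f b)"
    using omega_real_approx[OF _ s(2)] s(1) by auto
  have "norm (f a - f b) \<le> L * (norm (a - b) + 1)"
    using norm_diff_le_linear[of a b] mult_right_mono[OF L(2), of "norm (a - b) + 1"] by simp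
  moreover have "(D + 1) * L \<le> c * s" using s c by (simp add: field_simps)
  ultimately have "(D + 1) * L < L * (norm (a - b) + 1)" using ab by linarith
  then have "D < norm (a - b)" using L by (simp add: mult.commute)
  moreover have "c * norm (a - b) \<le> c * s" using ab c by simp
  ultimately show ?thesis using ab by (intro exI[of _ a] exI[of _ b]) auto
qed

end

definition asymp_lip :: "(real \<Rightarrow> real) \<Rightarrow> real" where
  "asymp_lip w = Inf {\<Lambda>. \<exists>r0. \<forall>r\<ge>r0. w r \<le> \<Lambda> * r}"

context
  fixes w :: "real \<Rightarrow> real" and L :: real
  assumes nonneg: "\<And>r. 0 \<le> r \<Longrightarrow> 0 \<le> w r" and linear: "\<And>r. 0 \<le> r \<Longrightarrow> w r \<le> L * (r + 1)"
begin

lemma asymp_lip_bounds_nonempty: "2 * max L 0 \<in> {\<Lambda>. \<exists>r0. \<forall>r\<ge>r0. w r \<le> \<Lambda> * r}"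
proof (intro CollectI exI[of _ 1] allI impI)
  fix r :: real assume r: "1 \<le> r"
  have "w r \<le> L * (r + 1)" using r by (intro linear) simp
  also have "\<dots> \<le> max L 0 * (r + 1)" using r by (intro mult_right_mono) auto
  also have "\<dots> \<le> 2 * max L 0 * r" using r mult_left_mono[of 1 r "max L 0"] by (simp add: algebra_simps)
  finally show "w r \<le> 2 * max L 0 * r" .
qed

lemma asymp_lip_bounds_nonneg: "\<Lambda> \<in> {\<Lambda>. \<exists>r0. \<forall>r\<ge>r0. w r \<le> \<Lambda> * r} \<Longrightarrow> 0 \<le> \<Lambda>"
proof (rule ccontr)
  assume "\<Lambda> \<in> {\<Lambda>. \<exists>r0. \<forall>r\<ge>r0. w r \<le> \<Lambda> * r}" "\<not> 0 \<le> \<Lambda>"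
  then obtain r0 where "\<forall>r\<ge>r0. w r \<le> \<Lambda> * r" "\<Lambda> < 0" by auto
  then have "w (max r0 1) \<le> \<Lambda> * max r0 1" "\<Lambda> * max r0 1 < 0" by (auto simp: mult_neg_pos)
  moreover have "0 \<le> w (max r0 1)" by (rule nonneg) simp
  ultimately show False by linarith
qed

lemma asymp_lip_nonneg: "0 \<le> asymp_lip w"
  unfolding asymp_lip_def using asymp_lip_bounds_nonempty asymp_lip_bounds_nonneg
  by (intro cInf_greatest) auto

lemma eventually_le_asymp_lip:
  assumes "\<epsilon> > 0"
  shows "\<exists>r0. \<forall>r\<ge>r0. w r \<le> (asymp_lip w + \<epsilon>) * r"
proof -
  have "Inf {\<Lambda>. \<exists>r0. \<forall>r\<ge>r0. w r \<le> \<Lambda> * r} < asymp_lip w + \<epsilon>"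
    using assms by (simp add: asymp_lip_def)
  obtain \<Lambda> where "\<Lambda> \<in> {\<Lambda>. \<exists>r0. \<forall>r\<ge>r0. w r \<le> \<Lambda> * r}" "\<Lambda> < asymp_lip w + \<epsilon>"
    using cInf_lessD[OF _ \<open>Inf _ < _\<close>] asymp_lip_bounds_nonempty by blast
  then obtain r0 where \<Lambda>: "\<forall>r\<ge>r0. w r \<le> \<Lambda> * r" "\<Lambda> < asymp_lip w + \<epsilon>" by auto
  have "w r \<le> (asymp_lip w + \<epsilon>) * r" if "r \<ge> max r0 0" for r
  proof -
    have "w r \<le> \<Lambda> * r" using \<Lambda> that by simp
    also have "\<dots> \<le> (asymp_lip w + \<epsilon>) * r" using \<Lambda> that by (intro mult_right_mono) auto
    finally show ?thesis .
  qed
  then show ?thesis by blast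
qed

lemma frequently_gt_asymp_lip:
  assumes "\<epsilon> > 0"
  shows "\<exists>r\<ge>R. (asymp_lip w - \<epsilon>) * r < w r"
proof (rule ccontr)
  assume "\<not> ?thesis"
  then have "\<forall>r\<ge>R. w r \<le> (asymp_lip w - \<epsilon>) * r" by (meson not_le)
  then have "asymp_lip w - \<epsilon> \<in> {\<Lambda>. \<exists>r0. \<forall>r\<ge>r0. w r \<le> \<Lambda> * r}" by blast
  moreover have "bdd_below {\<Lambda>. \<exists>r0. \<forall>r\<ge>r0. w r \<le> \<Lambda> * r}"
    using asymp_lip_bounds_nonneg by (auto simp: bdd_below_def)
  ultimately have "asymp_lip w \<le> asymp_lip w - \<epsilon>"
    unfolding asymp_lip_def by (rule cInf_lower)
  with assms show False by simp
qed

end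

section \<open>Choice of parameters\<close>

lemma one_plus_powr_le_linear:
  fixes u q :: real
  assumes "0 \<le> u" "u \<le> 1" "1 \<le> q"
  shows "(1 + u) powr q \<le> 1 + (2 powr q - 1) * u"
proof -
  have "(\<lambda>x::real. x powr q) ((1 - u) *\<^sub>R 1 + u *\<^sub>R 2) \<le> (1 - u) * 1 powr q + u * 2 powr q"
    using convex_onD[OF powr_convex[OF assms(3)], of u 1 2] assms by simp
  then show ?thesis by (simp add: algebra_simps)
qed

text \<open>This is where \<open>q < p\<close> enters: the left-hand side is of order \<open>\<theta>\<^sup>p\<close>, the right-hand side of
  order \<open>\<theta>\<^sup>q\<close>.\<close>

lemma exists_small_theta_powr_gap:
  fixes lam \<delta> C q p :: real
  assumes lam: "lam > 0" and \<delta>: "0 < \<delta>" "\<delta> < 1" and C: "C \<ge> 0" and q: "1 \<le> q" "q < p"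
  shows "\<exists>\<theta>. 0 < \<theta> \<and> \<theta> < 1 \<and> ((1 + C * \<theta> powr p) powr q - 1) * lam powr q < (\<delta> * \<theta>) powr q"
proof -
  define G where "G = (2 powr q - 1) * C * lam powr q + C + 1"
  have "2 powr 1 \<le> (2::real) powr q" using q by (intro powr_mono) auto
  then have "0 \<le> (2 powr q - 1) * C * lam powr q" using C by simp
  then have G: "(2 powr q - 1) * C * lam powr q \<le> G" "C \<le> G" "0 < G"
    using C by (auto simp: G_def)
  define \<kappa> where "\<kappa> = \<delta> powr q / G"
  have \<kappa>: "0 < \<kappa>" "C * \<kappa> \<le> 1"
    using \<delta> G C q powr_le1[of q \<delta>] mult_mono[of C G "\<delta> powr q" 1] by (auto simp: \<kappa>_def field_simps)
  define \<theta> where "\<theta> = min (1/2) ((\<kappa> powr (1/(p-q))) / 2)"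
  have \<theta>: "0 < \<theta>" "\<theta> < 1" using \<kappa> by (auto simp: \<theta>_def)
  have "\<theta> \<le> \<kappa> powr (1/(p-q)) / 2" "0 < \<kappa> powr (1/(p-q))" using \<kappa> by (auto simp: \<theta>_def)
  then have "\<theta> powr (p-q) < (\<kappa> powr (1/(p-q))) powr (p-q)"
    using \<theta> q by (intro powr_less_mono2) auto
  then have tpq: "\<theta> powr (p-q) < \<kappa>" using q \<kappa> by (simp add: powr_powr)
  have split: "\<theta> powr p = \<theta> powr (p-q) * \<theta> powr q" by (simp add: powr_add[symmetric])
  have tq: "0 < \<theta> powr q" "\<theta> powr q \<le> 1" using \<theta> q by (auto intro: powr_le1)
  define u where "u = C * \<theta> powr p"
  have "\<theta> powr p \<le> \<theta> powr (p-q)" using split tq by (simp add: mult_left_le)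
  then have "u \<le> C * \<kappa>" using tpq C by (simp add: u_def mult_left_mono)
  then have u: "0 \<le> u" "u \<le> 1" using C \<kappa> by (auto simp: u_def)
  have "((1 + u) powr q - 1) * lam powr q \<le> (2 powr q - 1) * u * lam powr q"
    using one_plus_powr_le_linear[OF u q(1)] lam by (intro mult_right_mono) auto
  also have "\<dots> = ((2 powr q - 1) * C * lam powr q) * \<theta> powr (p-q) * \<theta> powr q"
    by (simp add: u_def split)
  also have "\<dots> \<le> G * \<theta> powr (p-q) * \<theta> powr q"
    using G tq by (intro mult_right_mono) auto
  also have "\<dots> < G * \<kappa> * \<theta> powr q"
    using tpq G tq by simp
  also have "\<dots> = (\<delta> * \<theta>) powr q" using G \<delta> \<theta> by (simp add: \<kappa>_def powr_mult)
  finally show ?thesis using \<theta> unfolding u_def by blast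
qed

lemma exists_small_eps_powr_gap:
  fixes lam T K q :: real
  assumes lam: "lam > 0" and T: "T > 0" and K: "K \<ge> 0"
    and gap: "((1 + K) powr q - 1) * lam powr q < T powr q"
  shows "\<exists>\<epsilon>. 0 < \<epsilon> \<and> \<epsilon> < lam \<and> \<epsilon> < 1 \<and> 0 < T - \<epsilon> * (lam + \<epsilon>) \<and>
     (((lam + \<epsilon>) * (1 + K + \<epsilon>) / (lam - \<epsilon>)) powr q - (1 - \<epsilon>) powr q) * (lam + \<epsilon>) powr q
       < (T - \<epsilon> * (lam + \<epsilon>)) powr q"
proof -
  let ?h = "\<lambda>\<epsilon>. (((lam + \<epsilon>) * (1 + K + \<epsilon>) / (lam - \<epsilon>)) powr q - (1 - \<epsilon>) powr q) * (lam + \<epsilon>) powr q"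
  let ?g = "\<lambda>\<epsilon>::real. T - \<epsilon> * (lam + \<epsilon>)"
  have "(?h \<longlongrightarrow> ((1 + K) powr q - 1) * lam powr q) (at_right 0)"
    by (rule tendsto_eq_intros refl | use lam K in simp)+
  moreover have g: "(?g \<longlongrightarrow> T) (at_right 0)"
    by (rule tendsto_eq_intros refl | simp)+
  then have "((\<lambda>\<epsilon>. ?g \<epsilon> powr q) \<longlongrightarrow> T powr q) (at_right 0)"
    using T by (intro tendsto_intros) auto
  ultimately have "((\<lambda>\<epsilon>. ?g \<epsilon> powr q - ?h \<epsilon>) \<longlongrightarrow> T powr q - ((1 + K) powr q - 1) * lam powr q)
      (at_right 0)"
    by (intro tendsto_diff)
  then have "eventually (\<lambda>\<epsilon>. 0 < ?g \<epsilon> powr q - ?h \<epsilon>) (at_right 0)"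
    using gap by (intro order_tendstoD(1)) auto
  then have "eventually (\<lambda>\<epsilon>. ?h \<epsilon> < ?g \<epsilon> powr q) (at_right 0)" by simp
  moreover have "eventually (\<lambda>\<epsilon>. 0 < ?g \<epsilon>) (at_right 0)"
    using T by (intro order_tendstoD(1)[OF g])
  moreover have "eventually (\<lambda>\<epsilon>. 0 < \<epsilon> \<and> \<epsilon> < min lam 1) (at_right (0::real))"
    unfolding eventually_at_right_field using lam by (intro exI[of _ "min lam 1"]) auto
  ultimately have "eventually (\<lambda>\<epsilon>. ?h \<epsilon> < ?g \<epsilon> powr q \<and> 0 < ?g \<epsilon> \<and> 0 < \<epsilon> \<and> \<epsilon> < min lam 1) (at_right 0)"
    by (simp add: eventually_conj_iff)
  then obtain \<epsilon> where "?h \<epsilon> < ?g \<epsilon> powr q" "0 < ?g \<epsilon>" "0 < \<epsilon>" "\<epsilon> < min lam 1"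
    using eventually_happens'[OF trivial_limit_at_right_real] by blast
  then show ?thesis by (intro exI[of _ \<epsilon>]) simp
qed

lemma scaled_powr_gap:
  fixes G \<Lambda> T \<epsilon> d n q :: real
  assumes "0 < d" "0 \<le> n" "n \<le> \<Lambda> * d" "0 \<le> \<epsilon>" "0 \<le> G" "0 \<le> q"
    and pos: "0 < T - \<epsilon> * \<Lambda>" and gap: "G * \<Lambda> powr q < (T - \<epsilon> * \<Lambda>) powr q"
  shows "\<epsilon> * n \<le> T * d" "G * n powr q < (T * d - \<epsilon> * n) powr q"
proof -
  have "\<epsilon> * n \<le> \<epsilon> * \<Lambda> * d" using mult_left_mono[OF assms(3,4)] by (simp add: mult.assoc)
  moreover have "\<epsilon> * \<Lambda> * d \<le> T * d" using pos assms(1) by simp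
  ultimately show budget: "\<epsilon> * n \<le> T * d" by linarith
  have "0 \<le> \<Lambda>" using assms zero_le_mult_iff[of \<Lambda> d] by linarith
  have "G * n powr q \<le> G * (\<Lambda> * d) powr q" using assms by (intro mult_left_mono powr_mono2) auto
  also have "\<dots> = (G * \<Lambda> powr q) * d powr q" using \<open>0 \<le> \<Lambda>\<close> assms(1) by (simp add: powr_mult)
  also have "\<dots> < (T - \<epsilon> * \<Lambda>) powr q * d powr q" using gap assms(1) by simp
  also have "\<dots> = ((T - \<epsilon> * \<Lambda>) * d) powr q" using pos assms(1) by (simp add: powr_mult)
  also have "\<dots> \<le> (T * d - \<epsilon> * n) powr q"
    using pos assms \<open>\<epsilon> * n \<le> \<epsilon> * \<Lambda> * d\<close> by (intro powr_mono2) (auto simp: algebra_simps)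
  finally show "G * n powr q < (T * d - \<epsilon> * n) powr q" .
qed

section \<open>Approximation along weakly null sequences\<close>

definition compactly_approximable ::
    "('a::real_normed_vector \<Rightarrow> 'b::real_normed_vector) \<Rightarrow> real \<Rightarrow> real \<Rightarrow> bool" where
  "compactly_approximable f t \<delta> \<longleftrightarrow> (\<exists>x \<tau> K. \<tau> > t \<and> compact K \<and>
     (\<forall>xs. weakly_null xs \<and> (\<forall>n. norm (xs n) \<le> 1) \<longrightarrow>
        (\<exists>n0::nat. \<forall>n>n0. f (x + \<tau> *\<^sub>R xs n) \<in> ball_nbhd K (\<delta> * \<tau>))))"

lemma compactly_approximable_if_sublinear:
  assumes "coarse_map f" and small: "\<forall>r\<ge>r0. omega_real f r \<le> \<delta> * r"
  shows "compactly_approximable f t \<delta>"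
proof -
  define \<tau> where "\<tau> = max t (max r0 0) + 1"
  have \<tau>: "t < \<tau>" "r0 \<le> \<tau>" "0 \<le> \<tau>" by (auto simp: \<tau>_def)
  have near: "f (\<tau> *\<^sub>R v) \<in> ball_nbhd {f 0} (\<delta> * \<tau>)" if "norm v \<le> 1" for v
  proof -
    have "norm (\<tau> *\<^sub>R v - 0) \<le> \<tau>" using that \<tau> by (simp add: mult_left_le)
    then have "norm (f (\<tau> *\<^sub>R v) - f 0) \<le> \<delta> * \<tau>"
      using norm_diff_le_omega_real[OF assms(1)] small \<tau>(2) order_trans by blast
    then show ?thesis unfolding ball_nbhd_def by force
  qed
  show ?thesis unfolding compactly_approximable_def
    by (rule exI[of _ 0], rule exI[of _ \<tau>], rule exI[of _ "{f 0}"]) (use \<tau>(1) in \<open>auto intro!: exI[of _ "0::nat"] near\<close>)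
qed

lemma aus_eventually_near_endpoints:
  fixes xs :: "nat \<Rightarrow> 'a::real_normed_vector"
  assumes AUS: "\<forall>s\<in>{0..1}. rho_bar TYPE('a) s \<le> ereal (C * s powr p)" and "C \<ge> 0"
    and "a \<noteq> b" "0 \<le> \<theta>" "\<theta> \<le> 1" "\<epsilon> > 0" "weakly_null xs" "\<forall>n. norm (xs n) \<le> 1"
  shows "eventually (\<lambda>n. \<forall>z\<in>{a, b}.
    norm (midpoint a b + (\<theta> * (norm (a - b) / 2)) *\<^sub>R xs n - z) \<le> norm (a - b) / 2 * (1 + C * \<theta> powr p + \<epsilon>))
    sequentially"
proof -
  have "norm (midpoint a b - z) = norm (a - b) / 2" if "z \<in> {a, b}" for z
    using that dist_midpoint[of a b] by (auto simp: dist_norm)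
  moreover have "midpoint a b - z \<noteq> 0" if "z \<in> {a, b}" for z
    using that assms(3) by auto
  ultimately have "eventually (\<lambda>n. norm (midpoint a b - z + (\<theta> * (norm (a - b) / 2)) *\<^sub>R xs n)
      \<le> norm (a - b) / 2 * (1 + C * \<theta> powr p + \<epsilon>)) sequentially" if "z \<in> {a, b}" for z
    using aus_eventually_norm_le[OF assms(1,2) _ assms(4-8), of "midpoint a b - z"] that by metis
  then show ?thesis by (simp add: eventually_conj_iff algebra_simps)
qed

lemma mem_ball_nbhd_basis_box_of_near_pair:
  fixes e :: "nat \<Rightarrow> 'b::real_normed_vector"
  assumes basis: "schauder_basis e" and lq: "lower_lq_estimate e q" and "q \<ge> 1"
    and "0 \<le> \<epsilon>" "\<epsilon> \<le> 1" "0 \<le> A"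
    and y: "y = (1/2) *\<^sub>R (v - u)"
    and tail: "norm (y - basis_proj e N y) \<le> \<epsilon> * norm y"
    and near: "norm (w - u) \<le> A * norm y" "norm (w - v) \<le> A * norm y"
    and T: "\<epsilon> * norm y \<le> T"
    and budget: "(A powr q - (1-\<epsilon>) powr q) * norm y powr q < (T - \<epsilon> * norm y) powr q"
  shows "w \<in> ball_nbhd ((+) (midpoint u v) ` basis_box e N (\<lambda>i. 2 * (A * norm y) / norm (e i))) T"
proof -
  define z where "z = w - midpoint u v"
  have "midpoint u v - y = u" "midpoint u v + y = v"
    unfolding midpoint_def y by (simp_all add: algebra_simps flip: scaleR_add_left)
  then have pm: "norm (z + y) \<le> A * norm y" "norm (z - y) \<le> A * norm y"
    using near by (simp_all add: z_def algebra_simps)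
  have "norm (z - basis_proj e N z) \<le> T"
    using basis_tail_le_of_near_plus_minus[OF basis lq assms(3-6) tail pm T budget] .
  moreover have "norm z \<le> A * norm y"
  proof -
    have "2 * norm z \<le> norm (z + y) + norm (z - y)"
      using norm_triangle_ineq[of "z + y" "z - y"] by (simp add: scaleR_2[symmetric])
    then show ?thesis using pm by simp
  qed
  then have "basis_proj e N z \<in> basis_box e N (\<lambda>i. 2 * (A * norm y) / norm (e i))"
    by (rule basis_proj_in_box[OF basis lq assms(3)])
  moreover have "w = (midpoint u v + basis_proj e N z) + (z - basis_proj e N z)" by (simp add: z_def)
  ultimately show ?thesis unfolding ball_nbhd_def by blast
qed

lemma far_pair_estimates:
  fixes f :: "'a::real_normed_vector \<Rightarrow> 'b::real_normed_vector"
  assumes coarse: "coarse_map f" and \<epsilon>: "0 < \<epsilon>" "\<epsilon> < lam" and "0 \<le> \<kappa>"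
    and upper: "\<forall>r\<ge>norm (a - b) / 2. omega_real f r \<le> (lam + \<epsilon>) * r"
    and lower: "(lam - \<epsilon>) * norm (a - b) < norm (f a - f b)"
  defines "d \<equiv> norm (a - b) / 2" and "A \<equiv> (lam + \<epsilon>) * (1 + \<kappa> + \<epsilon>) / (lam - \<epsilon>)"
  shows "0 < d" "(lam - \<epsilon>) * d < norm (f a - f b) / 2" "norm (f a - f b) / 2 \<le> (lam + \<epsilon>) * d" "1 \<le> A"
    and "\<And>x z. norm (x - z) \<le> d * (1 + \<kappa> + \<epsilon>) \<Longrightarrow> norm (f x - f z) \<le> A * (norm (f a - f b) / 2)"
proof -
  show "0 < d" using lower by (auto simp: d_def)
  show lo: "(lam - \<epsilon>) * d < norm (f a - f b) / 2" using lower by (simp add: d_def)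
  have "norm (f a - f b) \<le> omega_real f (norm (a - b))"
    by (rule norm_diff_le_omega_real[OF coarse order_refl])
  also have "\<dots> \<le> (lam + \<epsilon>) * (2 * d)" using upper by (simp add: d_def)
  finally show "norm (f a - f b) / 2 \<le> (lam + \<epsilon>) * d" by simp
  show A: "1 \<le> A"
    using \<epsilon> assms(4) mult_mono[of "lam - \<epsilon>" "lam + \<epsilon>" 1 "1 + \<kappa> + \<epsilon>"] by (simp add: A_def field_simps)
  fix x z :: 'a assume xz: "norm (x - z) \<le> d * (1 + \<kappa> + \<epsilon>)"
  have "d \<le> d * (1 + \<kappa> + \<epsilon>)" using \<open>0 < d\<close> assms(4) \<epsilon> by simp
  then have "omega_real f (d * (1 + \<kappa> + \<epsilon>)) \<le> (lam + \<epsilon>) * (d * (1 + \<kappa> + \<epsilon>))"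
    using upper unfolding d_def by blast
  then have "norm (f x - f z) \<le> (lam + \<epsilon>) * (d * (1 + \<kappa> + \<epsilon>))"
    using norm_diff_le_omega_real[OF coarse xz] by linarith
  also have "\<dots> = A * ((lam - \<epsilon>) * d)" using \<epsilon> by (simp add: A_def field_simps)
  also have "\<dots> \<le> A * (norm (f a - f b) / 2)" using A lo by (intro mult_left_mono) auto
  finally show "norm (f x - f z) \<le> A * (norm (f a - f b) / 2)" .
qed

lemma compactly_approximable_of_far_pair:
  fixes f :: "'a::real_normed_vector \<Rightarrow> 'b::real_normed_vector" and e :: "nat \<Rightarrow> 'b"
  assumes basis: "schauder_basis e" and lq: "lower_lq_estimate e q" and q: "q \<ge> 1"
    and coarse: "coarse_map f"
    and AUS: "\<forall>s\<in>{0..1}. rho_bar TYPE('a) s \<le> ereal (C * s powr p)" and C: "C \<ge> 0"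
    and \<theta>: "0 < \<theta>" "\<theta> < 1" and \<epsilon>: "0 < \<epsilon>" "\<epsilon> < lam" "\<epsilon> < 1"
    and pos: "0 < \<delta> * \<theta> - \<epsilon> * (lam + \<epsilon>)"
    and gap: "(((lam + \<epsilon>) * (1 + C * \<theta> powr p + \<epsilon>) / (lam - \<epsilon>)) powr q - (1 - \<epsilon>) powr q)
      * (lam + \<epsilon>) powr q < (\<delta> * \<theta> - \<epsilon> * (lam + \<epsilon>)) powr q"
    and upper: "\<forall>r\<ge>norm (a - b) / 2. omega_real f r \<le> (lam + \<epsilon>) * r"
    and lower: "(lam - \<epsilon>) * norm (a - b) < norm (f a - f b)"
    and far: "t < \<theta> * (norm (a - b) / 2)"
  shows "compactly_approximable f t \<delta>"
proof -
  define d where "d = norm (a - b) / 2"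
  define y where "y = (1/2) *\<^sub>R (f b - f a)"
  define A where "A = (lam + \<epsilon>) * (1 + C * \<theta> powr p + \<epsilon>) / (lam - \<epsilon>)"
  have ny: "norm y = norm (f a - f b) / 2" by (simp add: y_def norm_minus_commute)
  have "0 \<le> C * \<theta> powr p" using C by simp
  note est = far_pair_estimates[OF coarse \<epsilon>(1,2) this upper lower, folded d_def A_def ny]
  have "a \<noteq> b" using lower by auto
  have "0 < (lam - \<epsilon>) * d" using est(1) \<epsilon> by simp
  then have "0 < norm y" using est(2) by linarith
  then obtain N where N: "norm (y - basis_proj e N y) < \<epsilon> * norm y"
    using basis_tail_small[OF basis mult_pos_pos[OF \<epsilon>(1)]] by blast
  have "(1 - \<epsilon>) powr q \<le> A powr q" using est(4) \<epsilon> q by (intro powr_mono2) auto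
  then have budget: "\<epsilon> * norm y \<le> \<delta> * (\<theta> * d)"
      "(A powr q - (1 - \<epsilon>) powr q) * norm y powr q < (\<delta> * (\<theta> * d) - \<epsilon> * norm y) powr q"
    using scaled_powr_gap[OF est(1) norm_ge_zero est(3) _ _ _ pos gap[folded A_def]] \<epsilon> q
    by (simp_all add: mult.assoc)
  define K where "K = (+) (midpoint (f a) (f b)) ` basis_box e N (\<lambda>i. 2 * (A * norm y) / norm (e i))"
  have in_K: "f (midpoint a b + (\<theta> * d) *\<^sub>R v) \<in> ball_nbhd K (\<delta> * (\<theta> * d))"
    if "\<forall>z\<in>{a, b}. norm (midpoint a b + (\<theta> * d) *\<^sub>R v - z) \<le> d * (1 + C * \<theta> powr p + \<epsilon>)" for v
    unfolding K_def
  proof (rule mem_ball_nbhd_basis_box_of_near_pair[OF basis lq q _ _ _ y_def _ _ _ budget])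
    show "norm (f (midpoint a b + (\<theta> * d) *\<^sub>R v) - f a) \<le> A * norm y"
      "norm (f (midpoint a b + (\<theta> * d) *\<^sub>R v) - f b) \<le> A * norm y"
      using that est(5) by auto
  qed (use \<epsilon> est(4) N in auto)
  have "\<exists>n0. \<forall>n>n0. f (midpoint a b + (\<theta> * d) *\<^sub>R xs n) \<in> ball_nbhd K (\<delta> * (\<theta> * d))"
    if "weakly_null xs" "\<forall>n. norm (xs n) \<le> 1" for xs
  proof -
    have "eventually (\<lambda>n. \<forall>z\<in>{a, b}.
        norm (midpoint a b + (\<theta> * d) *\<^sub>R xs n - z) \<le> d * (1 + C * \<theta> powr p + \<epsilon>)) sequentially"
      using aus_eventually_near_endpoints[OF AUS C \<open>a \<noteq> b\<close> _ _ \<epsilon>(1) that] \<theta>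
      unfolding d_def by simp
    then obtain n0 where "\<forall>n\<ge>n0. \<forall>z\<in>{a, b}.
        norm (midpoint a b + (\<theta> * d) *\<^sub>R xs n - z) \<le> d * (1 + C * \<theta> powr p + \<epsilon>)"
      unfolding eventually_sequentially by blast
    then show ?thesis using in_K by (intro exI[of _ n0]) auto
  qed
  moreover have "compact K" unfolding K_def by (intro compact_translation compact_basis_box)
  ultimately show ?thesis unfolding compactly_approximable_def using far
    by (intro exI[of _ "midpoint a b"] exI[of _ "\<theta> * d"] exI[of _ K]) (auto simp: d_def)
qed

lemma compactly_approximable_if_asymp_lip_pos:
  fixes f :: "'a::real_normed_vector \<Rightarrow> 'b::real_normed_vector" and e :: "nat \<Rightarrow> 'b"
  assumes basis: "schauder_basis e" and lq: "lower_lq_estimate e q" and q: "1 \<le> q" "q < p"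
    and coarse: "coarse_map f"
    and AUS: "\<forall>s\<in>{0..1}. rho_bar TYPE('a) s \<le> ereal (C * s powr p)" and C: "C \<ge> 0"
    and \<delta>: "0 < \<delta>" "\<delta> < 1" and lam: "0 < asymp_lip (omega_real f)"
  shows "compactly_approximable f t \<delta>"
proof -
  define lam where "lam = asymp_lip (omega_real f)"
  note omega = omega_real_nonneg[OF coarse] omega_real_le_linear[OF coarse]
  obtain \<theta> where \<theta>: "0 < \<theta>" "\<theta> < 1" and gap_\<theta>: "((1 + C * \<theta> powr p) powr q - 1) * lam powr q < (\<delta> * \<theta>) powr q"
    using exists_small_theta_powr_gap[OF lam[folded lam_def] \<delta> C q] by blast
  moreover have "0 \<le> C * \<theta> powr p" using C by simp
  ultimately obtain \<epsilon> where \<epsilon>: "0 < \<epsilon>" "\<epsilon> < lam" "\<epsilon> < 1" "0 < \<delta> * \<theta> - \<epsilon> * (lam + \<epsilon>)"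
    and gap: "(((lam + \<epsilon>) * (1 + C * \<theta> powr p + \<epsilon>) / (lam - \<epsilon>)) powr q - (1 - \<epsilon>) powr q)
      * (lam + \<epsilon>) powr q < (\<delta> * \<theta> - \<epsilon> * (lam + \<epsilon>)) powr q"
    using exists_small_eps_powr_gap[OF lam[folded lam_def] mult_pos_pos[OF \<delta>(1) \<theta>(1)]] by blast
  obtain r0 where r0: "\<forall>r\<ge>r0. omega_real f r \<le> (lam + \<epsilon>) * r"
    using eventually_le_asymp_lip[OF omega \<epsilon>(1)] unfolding lam_def by blast
  have "0 < lam - \<epsilon>" using \<epsilon> by simp
  then obtain a b where ab: "max (2 * r0) (2 * t / \<theta>) < norm (a - b)" "(lam - \<epsilon>) * norm (a - b) < norm (f a - f b)"
    using exists_far_pair[OF coarse _ allI[OF frequently_gt_asymp_lip[OF omega \<epsilon>(1)]]]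
    unfolding lam_def by blast
  show ?thesis
  proof (rule compactly_approximable_of_far_pair[OF basis lq q(1) coarse AUS C \<theta> \<epsilon> gap _ ab(2)])
    show "\<forall>r\<ge>norm (a - b) / 2. omega_real f r \<le> (lam + \<epsilon>) * r" using r0 ab(1) by auto
    show "t < \<theta> * (norm (a - b) / 2)" using ab(1) \<theta> by (simp add: field_simps)
  qed
qed

theorem lemma5p4:
  fixes f :: "'a::banach \<Rightarrow> 'b::banach" and e :: "nat \<Rightarrow> 'b" and p q :: real
  assumes "1 \<le> q" and "q < p"
    and "asympt_p_unif_smooth TYPE('a) p"
    and "one_unconditional_basis e" and "lower_lq_estimate e q"
    and "coarse_map f"
  shows "\<forall>t>0. \<forall>\<delta>\<in>{0<..<1}. \<exists>x \<tau> K. \<tau> > t \<and> compact K \<and>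
           (\<forall>xs. weakly_null xs \<and> (\<forall>n. norm (xs n) \<le> 1) \<longrightarrow>
              (\<exists>n0::nat. \<forall>n>n0. f (x + \<tau> *\<^sub>R xs n) \<in> ball_nbhd K (\<delta> * \<tau>)))"
proof (intro allI impI ballI)
  fix t \<delta> :: real assume "t > 0" "\<delta> \<in> {0<..<1}"
  obtain C where C: "C \<ge> 0" "\<forall>s\<in>{0..1}. rho_bar TYPE('a) s \<le> ereal (C * s powr p)"
    using asympt_p_unif_smooth_nonneg_constant[OF assms(3)] by blast
  have basis: "schauder_basis e" using assms(4) by (simp add: one_unconditional_basis_def)
  note omega = omega_real_nonneg[OF assms(6)] omega_real_le_linear[OF assms(6)]
  have "compactly_approximable f t \<delta>"
  proof (cases "asymp_lip (omega_real f) = 0")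
    case True
    then obtain r0 where "\<forall>r\<ge>r0. omega_real f r \<le> \<delta> * r"
      using eventually_le_asymp_lip[OF omega, of \<delta>] \<open>\<delta> \<in> {0<..<1}\<close> by auto
    then show ?thesis by (rule compactly_approximable_if_sublinear[OF assms(6)])
  next
    case False
    then have "0 < asymp_lip (omega_real f)" using asymp_lip_nonneg[OF omega] by simp
    with basis assms(1,2,5,6) C \<open>\<delta> \<in> {0<..<1}\<close> show ?thesis
      by (intro compactly_approximable_if_asymp_lip_pos) auto
  qed
  then show "\<exists>x \<tau> K. \<tau> > t \<and> compact K \<and>
           (\<forall>xs. weakly_null xs \<and> (\<forall>n. norm (xs n) \<le> 1) \<longrightarrow>
              (\<exists>n0::nat. \<forall>n>n0. f (x + \<tau> *\<^sub>R xs n) \<in> ball_nbhd K (\<delta> * \<tau>)))"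
    by (simp add: compactly_approximable_def)
qed

end
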